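(* Let $0<\phi\le1$, let $\mathcal{Q}=\{P_1,\dots,P_k\}$ be a set of polygons and $w_i=\phi\cdot d(P_i)$. Let $P_{\min}=P_j\in\mathcal{Q}$ be a polygon minimizing $|P_j^+(w_j/2)|$ and write $P^+_{\min}(w/2)=P_j^+(w_j/2)$; let $d_{\min}=\min_{P_i\in\mathcal{Q}}d(P_i)$. Let $\cap\mathcal{Q}^-(w)=\bigcap_i P_i^-(w_i)$ and $\cap\mathcal{Q}^+(w/2)=\bigcap_i P_i^+(w_i/2)$. If $\cap\mathcal{Q}^-(w)\neq\emptyset$ and $\phi\cdot d_{\min}>\sqrt8$, then $$\frac{\phi^2}{2}\cdot|P^+_{\min}(w/2)|\le|\cap\mathcal{Q}^+(w/2)|\le|P^+_{\min}(w/2)|.$$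
   Context: $d(P)$ is the diameter of $P$. For a polygon $P$ and $r\ge0$, $P^+(r)$ is the set of points at distance at most $r$ from some point of $P$, and $P^-(r)$ is the set of points of $P$ at distance at least $r$ from every point outside $P$. $|X|$ denotes the number of points of $\mathbb{Z}^2$ in the region $X$. *)

theory Defs
  imports "HOL-Analysis.Analysis"
begin

type_synonym pt = "real^2"

fun polygonal_path :: "pt list \<Rightarrow> (real \<Rightarrow> pt)" where
  "polygonal_path [] = linepath 0 0"
| "polygonal_path [a] = linepath a a"
| "polygonal_path (a # b # xs) = linepath a b +++ polygonal_path (b # xs)"

definition polygon :: "pt set \<Rightarrow> bool" where
  "polygon P \<longleftrightarrow> (\<exists>vs. length vs \<ge> 3 \<and>
     simple_path (polygonal_path (vs @ [hd vs])) \<and>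
     P = path_image (polygonal_path (vs @ [hd vs])) \<union>
         inside (path_image (polygonal_path (vs @ [hd vs]))))"

definition outer :: "pt set \<Rightarrow> real \<Rightarrow> pt set" where
  "outer P r = {x. \<exists>p\<in>P. dist x p \<le> r}"

definition inner :: "pt set \<Rightarrow> real \<Rightarrow> pt set" where
  "inner P r = {x\<in>P. \<forall>y. y \<notin> P \<longrightarrow> dist x y \<ge> r}"

definition lattice :: "pt set" where
  "lattice = {x. \<forall>i. x $ i \<in> \<int>}"

definition lcount :: "pt set \<Rightarrow> nat" where
  "lcount X = card (X \<inter> lattice)"

end

theory Submission
  imports Defs
begin

text \<open>Let \<open>c\<close> be a common point of the sets \<open>P\<^sub>i\<^sup>-(w\<^sub>i)\<close> and \<open>w\<close> the least \<open>w\<^sub>i\<close>.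
  The open disc of radius \<open>w\<^sub>i\<close> about \<open>c\<close> lies in \<open>P\<^sub>i\<close>, so the disc of radius \<open>3w/2\<close>
  lies in every \<open>P\<^sub>i\<^sup>+(w\<^sub>i/2)\<close>; it contains an axis-parallel square of side \<open>21w/10\<close>, hence
  at least \<open>(21w/10 - 1)\<^sup>2\<close> lattice points. On the other hand \<open>|P\<^sup>+\<^sub>m\<^sub>i\<^sub>n(w/2)|\<close> is at most
  the count for the polygon of least diameter \<open>d\<close>, whose \<open>w/2\<close>-neighbourhood lies in a square
  of side \<open>d + w\<close>; this gives at most \<open>(d + w + 1)\<^sup>2 \<le> ((2w + 1)/\<phi>)\<^sup>2\<close> points, and
  \<open>w > sqrt 8\<close> makes \<open>(2w + 1)\<^sup>2/2 \<le> (21w/10 - 1)\<^sup>2\<close>.\<close>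

lemma card_integers_between_le:
  fixes s t :: real
  shows "real (card {\<lceil>s\<rceil>..\<lfloor>t\<rfloor>}) \<le> max 0 (t - s + 1)"
proof -
  have "real_of_int (\<lfloor>t\<rfloor> - \<lceil>s\<rceil> + 1) \<le> t - s + 1"
    using floor_correct[of t] ceiling_correct[of s] by linarith
  then show ?thesis by (cases "\<lfloor>t\<rfloor> - \<lceil>s\<rceil> + 1 \<ge> 0") auto
qed

lemma card_integers_between_ge:
  fixes s t :: real
  shows "t - s - 1 \<le> real (card {\<lceil>s\<rceil>..\<lfloor>t\<rfloor>})"
proof -
  have "t - s - 1 \<le> real_of_int (\<lfloor>t\<rfloor> - \<lceil>s\<rceil> + 1)"
    using floor_correct[of t] ceiling_correct[of s] by linarith
  then show ?thesis by (cases "\<lfloor>t\<rfloor> - \<lceil>s\<rceil> + 1 \<ge> 0") auto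
qed

lemma lattice_Int_cbox:
  fixes a b :: pt
  shows "lattice \<inter> cbox a b = (\<lambda>(m, n). vector [of_int m, of_int n])
           ` ({\<lceil>a$1\<rceil>..\<lfloor>b$1\<rfloor>} \<times> {\<lceil>a$2\<rceil>..\<lfloor>b$2\<rfloor>})"
    (is "_ = ?g ` ?S")
proof
  show "lattice \<inter> cbox a b \<subseteq> ?g ` ?S"
  proof
    fix x assume x: "x \<in> lattice \<inter> cbox a b"
    then obtain m n where mn: "x$1 = of_int m" "x$2 = of_int n"
      unfolding lattice_def by (metis (mono_tags) Int_iff Ints_cases mem_Collect_eq)
    have "x = ?g (m, n)" using mn by (simp add: vec_eq_iff forall_2)
    moreover have "(m, n) \<in> ?S"
      using x mn by (auto simp: mem_box_cart ceiling_le_iff le_floor_iff dest: spec[of _ 1] spec[of _ 2])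
    ultimately show "x \<in> ?g ` ?S" by blast
  qed
  show "?g ` ?S \<subseteq> lattice \<inter> cbox a b"
    by (auto simp: lattice_def mem_box_cart forall_2 ceiling_le_iff le_floor_iff)
qed

lemma lcount_cbox:
  fixes a b :: pt
  shows "finite (cbox a b \<inter> lattice)"
    and "lcount (cbox a b) = card {\<lceil>a$1\<rceil>..\<lfloor>b$1\<rfloor>} * card {\<lceil>a$2\<rceil>..\<lfloor>b$2\<rfloor>}"
proof -
  have inj: "inj (\<lambda>(m::int, n::int). (vector [of_int m, of_int n] :: pt))"
    by (auto simp: inj_def vec_eq_iff forall_2)
  show "finite (cbox a b \<inter> lattice)"
    using lattice_Int_cbox[of a b] by (simp add: Int_commute)
  show "lcount (cbox a b) = card {\<lceil>a$1\<rceil>..\<lfloor>b$1\<rfloor>} * card {\<lceil>a$2\<rceil>..\<lfloor>b$2\<rfloor>}"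
    unfolding lcount_def Int_commute[of "cbox a b"] lattice_Int_cbox
    by (simp add: card_image inj_on_subset[OF inj] card_cartesian_product)
qed

lemma lcount_cbox_le:
  fixes a b :: pt
  assumes "\<forall>i. b$i - a$i \<le> L" and "0 \<le> L"
  shows "real (lcount (cbox a b)) \<le> (L + 1)^2"
proof -
  have side: "real (card {\<lceil>a$i\<rceil>..\<lfloor>b$i\<rfloor>}) \<le> L + 1" for i
    using card_integers_between_le[where s="a$i" and t="b$i"] assms(1)[rule_format, of i] assms(2)
    by linarith
  show ?thesis
    unfolding lcount_cbox(2) of_nat_mult power2_eq_square
    using side[of 1] side[of 2] by (intro mult_mono) auto
qed

lemma lcount_cbox_ge:
  fixes a b :: pt
  assumes "\<forall>i. L \<le> b$i - a$i" and "1 \<le> L"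
  shows "(L - 1)^2 \<le> real (lcount (cbox a b))"
proof -
  have side: "L - 1 \<le> real (card {\<lceil>a$i\<rceil>..\<lfloor>b$i\<rfloor>})" for i
    using card_integers_between_ge[where s="a$i" and t="b$i"] assms(1)[rule_format, of i]
    by linarith
  show ?thesis
    unfolding lcount_cbox(2) of_nat_mult power2_eq_square
    using side[of 1] side[of 2] assms(2) by (intro mult_mono) auto
qed

lemma finite_lattice_Int_bounded:
  fixes X :: "pt set"
  assumes "bounded X"
  shows "finite (X \<inter> lattice)"
proof -
  obtain a where "X \<subseteq> cbox (-a) a"
    using bounded_subset_cbox_symmetric[OF assms] by blast
  then show ?thesis
    using lcount_cbox(1)[of "-a" a] by (meson Int_mono finite_subset order_refl)
qed

lemma lcount_mono:
  assumes "X \<subseteq> Y" and "bounded Y"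
  shows "lcount X \<le> lcount Y"
  unfolding lcount_def
  using assms finite_lattice_Int_bounded[OF assms(2)] by (intro card_mono) auto

lemma bounded_outer:
  assumes "bounded P"
  shows "bounded (outer P r)"
proof -
  obtain a B where B: "\<forall>p\<in>P. dist a p \<le> B"
    using assms bounded_def by blast
  have "dist a x \<le> B + r" if x: "x \<in> outer P r" for x
  proof -
    obtain p where "p \<in> P" "dist x p \<le> r" using x unfolding outer_def by auto
    moreover have "dist a p \<le> B" using B \<open>p \<in> P\<close> by blast
    ultimately show ?thesis using dist_triangle[of a x p] dist_commute[of x p] by linarith
  qed
  then show ?thesis unfolding bounded_def by blast
qed

lemma outer_subset_cbox:
  fixes P :: "pt set"
  assumes "bounded P" and "P \<noteq> {}"
  obtains a where "outer P r \<subseteq> cbox a (\<chi> i. a$i + (diameter P + 2*r))"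
proof
  define a where "a = (\<chi> i. Inf ((\<lambda>p. p$i) ` P) - r)"
  have coord_le: "\<bar>p$i - q$i\<bar> \<le> diameter P" if "p \<in> P" "q \<in> P" for p q i
    using dist_vec_nth_le[of p i q] diameter_bounded_bound[OF assms(1) that]
    by (simp add: dist_real_def)
  have P_coord: "a$i + r \<le> p$i \<and> p$i \<le> a$i + r + diameter P" if "p \<in> P" for p i
  proof
    have lb: "p$i - diameter P \<le> q$i" if "q \<in> P" for q
      using coord_le[OF \<open>p \<in> P\<close> that, of i] by (simp add: abs_le_iff)
    then have "bdd_below ((\<lambda>p. p$i) ` P)"
      by (intro bdd_belowI[of _ "p$i - diameter P"]) blast
    then show "a$i + r \<le> p$i" unfolding a_def using that by (simp add: cInf_lower)
    have "p$i - diameter P \<le> Inf ((\<lambda>p. p$i) ` P)"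
      using assms(2) lb by (intro cInf_greatest) auto
    then show "p$i \<le> a$i + r + diameter P" unfolding a_def by simp
  qed
  show "outer P r \<subseteq> cbox a (\<chi> i. a$i + (diameter P + 2*r))"
  proof
    fix x assume "x \<in> outer P r"
    then obtain p where p: "p \<in> P" "dist x p \<le> r" unfolding outer_def by auto
    have near: "\<bar>x$i - p$i\<bar> \<le> r" for i
      using dist_vec_nth_le[of x i p] p(2) by (simp add: dist_real_def)
    show "x \<in> cbox a (\<chi> i. a$i + (diameter P + 2*r))"
      unfolding mem_box_cart vec_lambda_beta
    proof
      fix i
      show "a$i \<le> x$i \<and> x$i \<le> a$i + (diameter P + 2*r)"
        using near[of i] P_coord[OF p(1), of i] unfolding abs_le_iff by linarith
    qed
  qed
qed

lemma lcount_outer_le: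
  fixes P :: "pt set"
  assumes "bounded P" and "P \<noteq> {}" and "0 \<le> r"
  shows "real (lcount (outer P r)) \<le> (diameter P + 2*r + 1)^2"
proof -
  obtain a where sub: "outer P r \<subseteq> cbox a (\<chi> i. a$i + (diameter P + 2*r))"
    using outer_subset_cbox[OF assms(1,2)] .
  have "lcount (outer P r) \<le> lcount (cbox a (\<chi> i. a$i + (diameter P + 2*r)))"
    using lcount_mono[OF sub bounded_cbox] .
  also have "real \<dots> \<le> (diameter P + 2*r + 1)^2"
    using diameter_ge_0[OF assms(1)] assms(3) by (intro lcount_cbox_le) auto
  finally show ?thesis by simp
qed

lemma ball_subset_inner:
  assumes "c \<in> inner P r"
  shows "ball c r \<subseteq> P"
  using assms unfolding inner_def by (force simp: dist_commute)

lemma ball_subset_outer: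
  fixes P :: "pt set"
  assumes "c \<in> P" and "ball c r \<subseteq> P" and "0 \<le> s"
  shows "ball c (r + s) \<subseteq> outer P s"
proof
  fix y assume "y \<in> ball c (r + s)"
  then have t: "dist c y < r + s" by simp
  show "y \<in> outer P s"
  proof (cases "dist c y \<le> s")
    case True
    then show ?thesis using assms(1) unfolding outer_def by (auto simp: dist_commute)
  next
    case False
    define t where "t = dist c y"
    define p where "p = c + ((t - s) / t) *\<^sub>R (y - c)"
    have "t > 0" "t > s" using False assms(3) by (auto simp: t_def)
    have norm_yc: "norm (y - c) = t" by (simp add: t_def dist_norm norm_minus_commute)
    have "dist c p = t - s"
      using \<open>t > s\<close> \<open>t > 0\<close> by (simp add: p_def dist_norm norm_yc)
    then have "p \<in> ball c r" using t by (simp add: t_def)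
    then have "p \<in> P" using assms(2) by blast
    have "y - p = (s / t) *\<^sub>R (y - c)"
      using \<open>t > 0\<close> by (simp add: p_def algebra_simps diff_divide_distrib)
    then have "dist y p = s"
      using \<open>t > 0\<close> assms(3) by (simp add: dist_norm norm_yc)
    then show ?thesis using \<open>p \<in> P\<close> unfolding outer_def by auto
  qed
qed

lemma cbox_subset_ball:
  fixes c :: pt
  assumes "2 * h^2 < \<rho>^2" and "0 < \<rho>"
  shows "cbox (c - (\<chi> i. h)) (c + (\<chi> i. h)) \<subseteq> ball c \<rho>"
proof
  fix x assume "x \<in> cbox (c - (\<chi> i. h)) (c + (\<chi> i. h))"
  then have box: "c$i - h \<le> x$i \<and> x$i \<le> c$i + h" for i by (simp add: mem_box_cart)
  have "\<bar>x$i - c$i\<bar> \<le> h" for i using box[of i] unfolding abs_le_iff by linarith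
  then have sq: "(x$i - c$i)^2 \<le> h^2" for i
    using power_mono[OF _ abs_ge_zero, of "x$i - c$i" h 2] by simp
  have "(x$1 - c$1)^2 + (x$2 - c$2)^2 < \<rho>^2" using sq[of 1] sq[of 2] assms(1) by linarith
  then have "sqrt ((x$1 - c$1)^2 + (x$2 - c$2)^2) < \<rho>"
    using assms(2) by (intro real_less_lsqrt) auto
  then have "dist x c < \<rho>"
    by (simp add: dist_vec_def L2_set_def sum_2 dist_real_def)
  then show "x \<in> ball c \<rho>" by (simp add: dist_commute)
qed

lemma lcount_ball_ge:
  fixes c :: pt
  assumes "1/2 \<le> h" and "2 * h^2 < \<rho>^2" and "0 < \<rho>"
  shows "(2*h - 1)^2 \<le> real (lcount (ball c \<rho>))"
proof -
  have "(2*h - 1)^2 \<le> real (lcount (cbox (c - (\<chi> i. h)) (c + (\<chi> i. h))))"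
    using assms(1) by (intro lcount_cbox_ge) auto
  also have "\<dots> \<le> real (lcount (ball c \<rho>))"
    using lcount_mono[OF cbox_subset_ball[OF assms(2,3)] bounded_ball] by simp
  finally show ?thesis .
qed

lemma lcount_ball_three_halves_ge:
  fixes c :: pt
  assumes "10/21 \<le> w"
  shows "(21/10 * w - 1)^2 \<le> real (lcount (ball c (3/2 * w)))"
proof -
  \<comment> \<open>\<open>21/20 * sqrt 2 < 3/2\<close>: the square of half-side \<open>21/20 * w\<close> fits into the ball.\<close>
  have "(3/2 * w)^2 - 2 * (21/20 * w)^2 = 9/200 * w^2"
    by (simp add: power2_eq_square field_simps)
  moreover have "0 < w^2" using assms by simp
  ultimately have "2 * (21/20 * w)^2 < (3/2 * w)^2" by linarith
  then show ?thesis using lcount_ball_ge[of "21/20 * w" "3/2 * w" c] assms by simp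
qed

lemma ball_subset_Inter_outer:
  fixes Q :: "'i \<Rightarrow> pt set"
  assumes "\<And>i. i \<in> I \<Longrightarrow> c \<in> inner (Q i) (r i)"
    and "\<And>i. i \<in> I \<Longrightarrow> \<rho> \<le> r i" and "0 \<le> \<rho>"
  shows "ball c (3/2 * \<rho>) \<subseteq> (\<Inter>i\<in>I. outer (Q i) (r i / 2))"
proof -
  have "ball c (3/2 * \<rho>) \<subseteq> outer (Q i) (r i / 2)" if "i \<in> I" for i
  proof -
    have "ball c (3/2 * \<rho>) \<subseteq> ball c (r i + r i / 2)" using assms(2)[OF that] by auto
    also have "\<dots> \<subseteq> outer (Q i) (r i / 2)"
      using assms(1)[OF that] assms(2)[OF that] assms(3)
      by (intro ball_subset_outer ball_subset_inner) (auto simp: inner_def)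
    finally show ?thesis .
  qed
  then show ?thesis by blast
qed

lemma lcount_outer_half_scaled_diameter_le:
  fixes P :: "pt set"
  assumes "bounded P" and "P \<noteq> {}" and "0 < \<phi>" and "\<phi> \<le> 1"
  shows "\<phi>^2 * real (lcount (outer P (\<phi> * diameter P / 2))) \<le> (2 * \<phi> * diameter P + 1)^2"
proof -
  have d: "0 \<le> diameter P" using diameter_ge_0[OF assms(1)] .
  have "\<phi> * (diameter P + \<phi> * diameter P + 1) = \<phi> * diameter P + \<phi> * (\<phi> * diameter P) + \<phi>"
    by (simp add: algebra_simps)
  also have "\<dots> \<le> 2 * \<phi> * diameter P + 1"
  proof -
    have "\<phi> * (\<phi> * diameter P) \<le> \<phi> * diameter P"
      using assms(3,4) d by (intro mult_left_le_one_le) auto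
    moreover have "2 * \<phi> * diameter P = \<phi> * diameter P + \<phi> * diameter P" by simp
    ultimately show ?thesis using assms(4) by linarith
  qed
  finally have scaled: "\<phi> * (diameter P + \<phi> * diameter P + 1) \<le> 2 * \<phi> * diameter P + 1" .
  have "\<phi>^2 * real (lcount (outer P (\<phi> * diameter P / 2)))
      \<le> \<phi>^2 * (diameter P + \<phi> * diameter P + 1)^2"
    using lcount_outer_le[OF assms(1,2), of "\<phi> * diameter P / 2"] assms(3) d
    by (intro mult_left_mono) auto
  also have "\<dots> = (\<phi> * (diameter P + \<phi> * diameter P + 1))^2" by (simp add: power_mult_distrib)
  also have "\<dots> \<le> (2 * \<phi> * diameter P + 1)^2"
    using scaled assms(3) d by (intro power_mono) auto
  finally show ?thesis .
qed

lemma polygon_bounded: "polygon P \<Longrightarrow> bounded P"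
  unfolding polygon_def by (metis bounded_Un bounded_inside bounded_simple_path_image)

lemma half_sq_two_mul_add_one_le:
  fixes w :: real
  assumes "14/5 \<le> w"
  shows "(2*w + 1)^2 / 2 \<le> (21/10 * w - 1)^2"
proof -
  have "0 \<le> w * (241/100 * w - 31/5)" using assms by simp
  moreover have "(21/10 * w - 1)^2 - (2*w + 1)^2 / 2 = w * (241/100 * w - 31/5) + 1/2"
    by (simp add: power2_eq_square field_simps)
  ultimately show ?thesis by linarith
qed

theorem lemma15:
  fixes \<phi> :: real and k :: nat and Q :: "nat \<Rightarrow> pt set" and j :: nat
  assumes "0 < \<phi>" "\<phi> \<le> 1"
    and "k \<ge> 1"
    and "\<forall>i<k. polygon (Q i)"
    and "j < k"
    and "\<forall>i<k. lcount (outer (Q j) (\<phi> * diameter (Q j) / 2))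
                 \<le> lcount (outer (Q i) (\<phi> * diameter (Q i) / 2))"
    and "(\<Inter>i\<in>{..<k}. inner (Q i) (\<phi> * diameter (Q i))) \<noteq> {}"
    and "\<phi> * (MIN i\<in>{..<k}. diameter (Q i)) > sqrt 8"
  shows "\<phi>^2 / 2 * real (lcount (outer (Q j) (\<phi> * diameter (Q j) / 2)))
           \<le> real (lcount (\<Inter>i\<in>{..<k}. outer (Q i) (\<phi> * diameter (Q i) / 2)))
       \<and> lcount (\<Inter>i\<in>{..<k}. outer (Q i) (\<phi> * diameter (Q i) / 2))
           \<le> lcount (outer (Q j) (\<phi> * diameter (Q j) / 2))"
proof -
  define r where "r i = \<phi> * diameter (Q i)" for i
  define Y where "Y = (\<Inter>i\<in>{..<k}. outer (Q i) (r i / 2))"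
  obtain c where c: "\<And>i. i < k \<Longrightarrow> c \<in> inner (Q i) (r i)"
    using assms(7) unfolding r_def by auto
  have "(MIN i\<in>{..<k}. diameter (Q i)) \<in> (\<lambda>i. diameter (Q i)) ` {..<k}"
    using assms(3) by (intro Min_in) (auto simp: lessThan_empty_iff)
  then obtain m where m: "m < k" "diameter (Q m) = (MIN i\<in>{..<k}. diameter (Q i))" by auto
  have r_min: "r m \<le> r i" if "i < k" for i
    unfolding r_def using m assms(1) that by (intro mult_left_mono) auto
  have "14/5 \<le> sqrt 8" by (rule real_le_rsqrt) (simp add: power_divide)
  moreover have "sqrt 8 < r m" using assms(8) m(2) by (simp add: r_def)
  ultimately have w: "14/5 \<le> r m" by linarith
  have Y_sub: "Y \<subseteq> outer (Q j) (r j / 2)" unfolding Y_def using assms(5) by blast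
  have bounded_Y: "bounded (outer (Q j) (r j / 2))"
    using bounded_outer polygon_bounded assms(4,5) by blast
  have "ball c (3/2 * r m) \<subseteq> Y"
    unfolding Y_def using c r_min w by (intro ball_subset_Inter_outer) auto
  then have "lcount (ball c (3/2 * r m)) \<le> lcount Y"
    using lcount_mono bounded_subset[OF bounded_Y Y_sub] by blast
  then have lower: "(21/10 * r m - 1)^2 \<le> real (lcount Y)"
    using lcount_ball_three_halves_ge[of "r m" c] w by linarith
  have "\<phi>^2 * real (lcount (outer (Q j) (r j / 2))) \<le> \<phi>^2 * real (lcount (outer (Q m) (r m / 2)))"
    using assms(6) m(1) by (intro mult_left_mono) (auto simp: r_def)
  also have "\<dots> \<le> (2 * r m + 1)^2"
    using lcount_outer_half_scaled_diameter_le[of "Q m" \<phi>] polygon_bounded assms(1,2,4) c[OF m(1)] m(1)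
    by (auto simp: r_def inner_def mult.assoc)
  finally show ?thesis
    using half_sq_two_mul_add_one_le[OF w] lower lcount_mono[OF Y_sub bounded_Y]
    unfolding Y_def r_def by simp
qed

end
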